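(* Let $k\in\mathbb{P}$, $b\geq 2$ an integer, and $M\in\mathbb{N}$. Suppose $X'=(x_1',\dots,x_k')$ and $X=(x_1,\dots,x_k)$ are the greedy presentations of integers $r_1,r_2\in\{0,1,\dots,M\}$ respectively. If $X'\preceq X$, then $w(r_1)\leq w(r_2)$.
   Context: $\mathbb{P}$ denotes the positive integers, $\mathbb{N}$ the nonnegative integers. Let $B_i=\frac{b^i-1}{b-1}$ for $1\le i\le k$. The greedy presentation of $N\in\mathbb{N}$ is the tuple $(x_1,\dots,x_k)\in\mathbb{N}^k$ with $\sum_i B_i x_i=N$ obtained by the greedy algorithm (take $x_k$ maximal, then $x_{k-1}$ maximal for the remainder, etc.); equivalently it satisfies $x_k=\lfloor (b-1)N/(b^k-1)\rfloor$, $x_i\in\{0,\dots,b\}$ for $1\le i\le k-1$, and if $2\le i\le k-1$ and $x_i=b$ then $x_1=\cdots=x_{i-1}=0$. The weight of $N$ is $w(N)=\sum_{i=1}^k b^i x_i$ where $(x_i)$ is its greedy presentation. The colexicographic order $\preceq$ on tuples: $(x_1',\dots,x_k')\preceq(x_1,\dots,x_k)$ iff either $x_i'=x_i$ for all $i$, or there is $j$ with $x_j'<x_j$ and $x_i'=x_i$ for all $i>j$. *)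

theory Defs
  imports Main
begin

text \<open>B_i = (b^i - 1)/(b - 1); exact division in nat for b \<ge> 2.\<close>
definition Bnum :: "nat \<Rightarrow> nat \<Rightarrow> nat" where
  "Bnum b i = (b ^ i - 1) div (b - 1)"

text \<open>Greedy algorithm: take x_i maximal (i = k down to 1) for the remainder.
  Tuples are functions nat \<Rightarrow> nat, meaningful on indices 1..k (0 elsewhere).\<close>
fun greedy_aux :: "nat \<Rightarrow> nat \<Rightarrow> nat \<Rightarrow> (nat \<Rightarrow> nat)" where
  "greedy_aux b 0 N = (\<lambda>_. 0)"
| "greedy_aux b (Suc i) N =
     (greedy_aux b i (N mod Bnum b (Suc i)))(Suc i := N div Bnum b (Suc i))"

definition greedy_pres :: "nat \<Rightarrow> nat \<Rightarrow> nat \<Rightarrow> (nat \<Rightarrow> nat)" where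
  "greedy_pres b k N = greedy_aux b k N"

definition weight :: "nat \<Rightarrow> nat \<Rightarrow> nat \<Rightarrow> nat" where
  "weight b k N = (\<Sum>i=1..k. b ^ i * greedy_pres b k N i)"

definition colex_le :: "nat \<Rightarrow> (nat \<Rightarrow> nat) \<Rightarrow> (nat \<Rightarrow> nat) \<Rightarrow> bool" where
  "colex_le k x' x \<longleftrightarrow>
     (\<forall>i\<in>{1..k}. x' i = x i) \<or>
     (\<exists>j\<in>{1..k}. x' j < x j \<and> (\<forall>i\<in>{j<..k}. x' i = x i))"

end

theory Submission
  imports Defs
begin

text \<open>Since B_{i+1} = b B_i + 1, a number N < B_{i+1} has greedy digit x_i at most b,
  and if x_i = b nothing is left for the lower digits; by induction on i the greedy
  presentation of such an N (of length i) weighs at most b^{i+1}. So a larger digit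
  x_{i+1} gains at least b^{i+1}, which is more than all lower digits of the competing
  presentation weigh, and equal top digits reduce the colexicographic comparison to
  the shorter presentations of the remainders.\<close>

lemma power_minus_one_eq_sum_nat:
  fixes b :: nat
  assumes "b \<ge> 1"
  shows "b ^ n - 1 = (b - 1) * (\<Sum>l<n. b ^ l)"
proof -
  have "int (b ^ n - 1) = int ((b - 1) * (\<Sum>l<n. b ^ l))"
    using assms power_diff_1_eq[of "int b" n] by (simp add: of_nat_diff)
  then show ?thesis by (simp only: of_nat_eq_iff)
qed

lemma Bnum_eq_sum: "b \<ge> 2 \<Longrightarrow> Bnum b i = (\<Sum>l<i. b ^ l)"
  unfolding Bnum_def by (subst power_minus_one_eq_sum_nat) auto

lemma Bnum_Suc: "b \<ge> 2 \<Longrightarrow> Bnum b (Suc i) = b * Bnum b i + 1"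
  unfolding Bnum_eq_sum sum.lessThan_Suc_shift by (simp add: sum_distrib_left)

lemma greedy_pres_Suc:
  "greedy_pres b (Suc i) N =
     (greedy_pres b i (N mod Bnum b (Suc i)))(Suc i := N div Bnum b (Suc i))"
  by (simp add: greedy_pres_def)

lemma greedy_pres_zero: "greedy_pres b i 0 = (\<lambda>_. 0)"
  unfolding greedy_pres_def by (induction i) auto

lemma weight_zero: "weight b i 0 = 0"
  by (simp add: weight_def greedy_pres_zero)

lemma weight_Suc:
  "weight b (Suc i) N =
     b ^ Suc i * (N div Bnum b (Suc i)) + weight b i (N mod Bnum b (Suc i))"
proof -
  have "(\<Sum>l=1..i. b ^ l * greedy_pres b (Suc i) N l) = weight b i (N mod Bnum b (Suc i))"
    unfolding weight_def greedy_pres_Suc by (intro sum.cong) auto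
  then show ?thesis
    by (simp add: weight_def greedy_pres_Suc)
qed

lemma weight_le_power:
  assumes "b \<ge> 2" and "N < Bnum b (Suc i)"
  shows "weight b i N \<le> b ^ Suc i"
  using assms(2)
proof (induction i arbitrary: N)
  case 0
  then show ?case by (simp add: weight_def)
next
  case (Suc i)
  define B where "B = Bnum b (Suc i)"
  have "B \<ge> 1" and N_le: "N \<le> b * B"
    using Suc.prems assms(1) by (simp_all add: B_def Bnum_Suc)
  have IH: "weight b i (N mod B) \<le> b ^ Suc i"
    using Suc.IH \<open>B \<ge> 1\<close> by (simp add: B_def)
  have "N div B \<le> b"
    using div_le_mono[OF N_le, of B] \<open>B \<ge> 1\<close> by simp
  then consider "N div B = b" | "N div B \<le> b - 1"
    by linarith
  then show ?case
  proof cases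
    case 1
    then have "N mod B = 0"
      using N_le div_mult_mod_eq[of N B] by simp
    with 1 show ?thesis
      by (simp add: weight_Suc weight_zero flip: B_def)
  next
    case 2
    have "b ^ Suc i * (N div B) \<le> b ^ Suc i * (b - 1)"
      using 2 by (rule mult_le_mono2)
    then have "weight b (Suc i) N \<le> b ^ Suc i * (b - 1) + b ^ Suc i"
      using IH weight_Suc[of b i N] unfolding B_def by linarith
    also have "\<dots> = b ^ Suc (Suc i)"
      using assms(1) by (cases b) simp_all
    finally show ?thesis .
  qed
qed

lemma colex_le_Suc:
  "colex_le (Suc k) x' x \<longleftrightarrow>
     x' (Suc k) < x (Suc k) \<or> x' (Suc k) = x (Suc k) \<and> colex_le k x' x"
proof
  assume "colex_le (Suc k) x' x"
  then consider "\<forall>i\<in>{1..Suc k}. x' i = x i"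
    | j where "j \<in> {1..Suc k}" "x' j < x j" "\<forall>i\<in>{j<..Suc k}. x' i = x i"
    unfolding colex_le_def by blast
  then show "x' (Suc k) < x (Suc k) \<or> x' (Suc k) = x (Suc k) \<and> colex_le k x' x"
  proof cases
    case 1
    then show ?thesis by (simp add: colex_le_def)
  next
    case (2 j)
    then show ?thesis
      by (cases "j = Suc k") (auto simp: colex_le_def)
  qed
next
  assume "x' (Suc k) < x (Suc k) \<or> x' (Suc k) = x (Suc k) \<and> colex_le k x' x"
  then show "colex_le (Suc k) x' x"
    unfolding colex_le_def by (fastforce simp: le_Suc_eq)
qed

lemma colex_le_fun_upd_above:
  "k < j \<Longrightarrow> colex_le k (x'(j := a)) (x(j := c)) \<longleftrightarrow> colex_le k x' x"
  unfolding colex_le_def by auto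

lemma weight_mono_colex:
  assumes "b \<ge> 2" and "colex_le i (greedy_pres b i N') (greedy_pres b i N)"
  shows "weight b i N' \<le> weight b i N"
  using assms(2)
proof (induction i arbitrary: N' N)
  case 0
  then show ?case by (simp add: weight_def)
next
  case (Suc i)
  define B where "B = Bnum b (Suc i)"
  from Suc.prems consider
    (top_less) "N' div B < N div B"
  | (top_eq) "N' div B = N div B"
      "colex_le i (greedy_pres b i (N' mod B)) (greedy_pres b i (N mod B))"
    unfolding colex_le_Suc greedy_pres_Suc colex_le_fun_upd_above[OF lessI]
    by (auto simp flip: B_def)
  then show ?case
  proof cases
    case top_less
    have "B \<ge> 1"
      using assms(1) by (simp add: B_def Bnum_Suc)
    then have "weight b i (N' mod B) \<le> b ^ Suc i"
      using weight_le_power[OF assms(1)] by (simp add: B_def)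
    then have "weight b (Suc i) N' \<le> b ^ Suc i * (N' div B + 1)"
      by (simp add: weight_Suc flip: B_def)
    also have "\<dots> \<le> b ^ Suc i * (N div B)"
      using top_less by (intro mult_le_mono2) simp
    also have "\<dots> \<le> weight b (Suc i) N"
      by (simp add: weight_Suc flip: B_def)
    finally show ?thesis .
  next
    case top_eq
    then show ?thesis
      using Suc.IH by (simp add: weight_Suc flip: B_def)
  qed
qed

theorem lemma3p4:
  fixes k b M r1 r2 :: nat and X' X :: "nat \<Rightarrow> nat"
  assumes "k \<ge> 1" and "b \<ge> 2"
    and "r1 \<in> {0..M}" and "r2 \<in> {0..M}"
    and "X' = greedy_pres b k r1" and "X = greedy_pres b k r2"
    and "colex_le k X' X"
  shows "weight b k r1 \<le> weight b k r2"
  \<comment> \<open>Monotonicity holds for every length, including \<open>k = 0\<close>, and needs no bound \<open>M\<close>.\<close>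
  using weight_mono_colex[OF assms(2)] assms(5-7) by simp

end
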